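(* Consider a fork-join queueing network with nodes $\mathbf N=\{1,\dots,n\}$, topology given by a directed graph $\mathcal G=(\mathbf N,\mathbf A)$, initial buffer contents $r_i\in\{0,1,2,\dots\}\cup\{\infty\}$ with $r_i=\infty$ exactly for the nodes $i$ with $\mathbf P(i)=\emptyset$, and service times $\tau_{ik}>0$ ($i=1,\dots,n$, $k=1,2,\dots$). Let the departure epochs $d_i(k)\in\underline{\mathbb R}$, $k\ge1$, satisfy, for all $i$ and all $k\ge1$, $$d_i(k)=\tau_{ik}\otimes a_i(k)\oplus\tau_{ik}\otimes d_i(k-1),\qquad a_i(k)=\begin{cases}\bigoplus_{j\in\mathbf P(i)} d_j(k-r_i), & \mathbf P(i)\neq\emptyset,\\ \varepsilon, & \mathbf P(i)=\emptyset,\end{cases}$$ with the conventions $d_i(0)=0$ and $d_i(k)=\varepsilon$ for $k<0$. Let $M=\max\{r_i: r_i<\infty\}$ (with $M=0$ if no $r_i$ is finite) and $M'=\max(M,1)$. For each integer $m\ge0$ let $G_m=(g^m_{ij})$ be the $n\times n$ matrix with $g^m_{ij}=0$ if $i\in\mathbf P(j)$ and $r_j=m$, and $g^m_{ij}=\varepsilon$ otherwise, and let $\mathcal G_0$ be the graph associated with $G_0$. Let $\mathcal T_k=\mathrm{diag}(\tau_{1k},\dots,\tau_{nk})$ (off-diagonal entries $\varepsilon$). If $\mathcal G_0$ is acyclic and $p$ is the length of its longest path, then for every $k\ge1$ the vector $\mathbf d(k)=(d_1(k),\dots,d_n(k))^T$ satisfies the explicit equation $$\mathbf d(k)=\bigoplus_{m=1}^{M'}T_m(k)\otimes\mathbf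 d(k-m),$$ where $$T_1(k)=(E\oplus\mathcal T_k\otimes G_0^T)^p\otimes\mathcal T_k\otimes(E\oplus G_1^T),\qquad T_m(k)=(E\oplus\mathcal T_k\otimes G_0^T)^p\otimes\mathcal T_k\otimes G_m^T\ \ (m=2,\dots,M').$$
   Context: Max-plus algebra: on $\underline{\mathbb R}=\mathbb R\cup\{\varepsilon\}$ with $\varepsilon=-\infty$, define $x\oplus y=\max(x,y)$ and $x\otimes y=x+y$ (with $x\otimes\varepsilon=\varepsilon\otimes x=\varepsilon$). For matrices, $(X\oplus Y)_{ij}=x_{ij}\oplus y_{ij}$, $(X\otimes Y)_{ij}=\bigoplus_k x_{ik}\otimes y_{kj}$; matrix–vector products likewise; $\bigoplus$ over an index set denotes iterated $\oplus$ (maximum), and an empty $\oplus$-sum equals $\varepsilon$. $E$ is the $n\times n$ identity (diagonal $0$, off-diagonal $\varepsilon$); $X^0=E$, $X^q=X\otimes X^{q-1}$; $X^T$ is the transpose. The graph associated with an $n\times n$ matrix $X$ has vertices $\{1,\dots,n\}$ and an arc $(i,j)$ iff $x_{ij}\ne\varepsilon$ (loops count as cycles); path length = number of arcs. For the network graph $\mathcal G=(\mathbf N,\mathbf A)$, $\mathbf P(i)=\{j:(j,i)\in\mathbf A\}$ is the set of predecessors of node $i$. Interpretation: $d_i(k)$ is the $k$th departure epoch from node $i$, $a_i(k)$ the $k$th arrival epoch into its queue, $r_i$ the initial number of customers waiting in its buffer; a node with no predecessors represents an infinite external arrival stream. *)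

theory Defs
  imports Main "HOL-Library.Extended_Real"
begin

text \<open>Max-plus algebra on ereal: epsilon = -\<infinity>, oplus = max (Sup), otimes = +.
  All quantities considered are finite or -\<infinity>. Matrices are n x n, indexed by {1..n},
  represented as functions nat \<Rightarrow> nat \<Rightarrow> ereal (entries outside {1..n} are irrelevant).\<close>

type_synonym mpmat = "nat \<Rightarrow> nat \<Rightarrow> ereal"
type_synonym mpvec = "nat \<Rightarrow> ereal"

definition mp_add :: "mpmat \<Rightarrow> mpmat \<Rightarrow> mpmat" where
  "mp_add X Y = (\<lambda>i j. max (X i j) (Y i j))"

definition mp_mult :: "nat \<Rightarrow> mpmat \<Rightarrow> mpmat \<Rightarrow> mpmat" where
  "mp_mult n X Y = (\<lambda>i j. SUP k\<in>{1..n}. X i k + Y k j)"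

definition mp_mult_vec :: "nat \<Rightarrow> mpmat \<Rightarrow> mpvec \<Rightarrow> mpvec" where
  "mp_mult_vec n X v = (\<lambda>i. SUP j\<in>{1..n}. X i j + v j)"

definition mp_id :: mpmat where
  "mp_id = (\<lambda>i j. if i = j then 0 else -\<infinity>)"

fun mp_pow :: "nat \<Rightarrow> mpmat \<Rightarrow> nat \<Rightarrow> mpmat" where
  "mp_pow n X 0 = mp_id"
| "mp_pow n X (Suc q) = mp_mult n X (mp_pow n X q)"

definition mp_transpose :: "mpmat \<Rightarrow> mpmat" where
  "mp_transpose X = (\<lambda>i j. X j i)"

text \<open>Paths in the graph associated with a matrix X: vertex lists with arcs (i,j) iff X i j \<noteq> -\<infinity>.
  The length of the path is (length vs - 1).\<close>
definition mp_path :: "nat \<Rightarrow> mpmat \<Rightarrow> nat list \<Rightarrow> bool" where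
  "mp_path n X vs \<longleftrightarrow> vs \<noteq> [] \<and> set vs \<subseteq> {1..n} \<and>
     (\<forall>l. Suc l < length vs \<longrightarrow> X (vs ! l) (vs ! Suc l) \<noteq> -\<infinity>)"

definition mp_acyclic :: "nat \<Rightarrow> mpmat \<Rightarrow> bool" where
  "mp_acyclic n X \<longleftrightarrow> \<not> (\<exists>vs. mp_path n X vs \<and> length vs \<ge> 2 \<and> hd vs = last vs)"

definition longest_path_length :: "nat \<Rightarrow> mpmat \<Rightarrow> nat \<Rightarrow> bool" where
  "longest_path_length n X p \<longleftrightarrow>
     (\<exists>vs. mp_path n X vs \<and> length vs = Suc p) \<and>
     (\<forall>vs. mp_path n X vs \<longrightarrow> length vs \<le> Suc p)"

definition preds :: "(nat \<times> nat) set \<Rightarrow> nat \<Rightarrow> nat set" where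
  "preds A i = {j. (j, i) \<in> A}"

definition Mfin :: "nat \<Rightarrow> (nat \<Rightarrow> enat) \<Rightarrow> nat" where
  "Mfin n r = Max ({0} \<union> {the_enat (r i) | i. i \<in> {1..n} \<and> r i \<noteq> \<infinity>})"

definition Gmat :: "(nat \<times> nat) set \<Rightarrow> (nat \<Rightarrow> enat) \<Rightarrow> nat \<Rightarrow> mpmat" where
  "Gmat A r m = (\<lambda>i j. if i \<in> preds A j \<and> r j = enat m then 0 else -\<infinity>)"

definition Tdiag :: "(nat \<Rightarrow> nat \<Rightarrow> real) \<Rightarrow> nat \<Rightarrow> mpmat" where
  "Tdiag \<tau> k = (\<lambda>i j. if i = j then ereal (\<tau> i k) else -\<infinity>)"

definition Tm :: "nat \<Rightarrow> (nat \<times> nat) set \<Rightarrow> (nat \<Rightarrow> enat) \<Rightarrow> (nat \<Rightarrow> nat \<Rightarrow> real)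
                  \<Rightarrow> nat \<Rightarrow> nat \<Rightarrow> nat \<Rightarrow> mpmat" where
  "Tm n A r \<tau> p m k =
     mp_mult n (mp_pow n (mp_add mp_id (mp_mult n (Tdiag \<tau> k) (mp_transpose (Gmat A r 0)))) p)
       (mp_mult n (Tdiag \<tau> k)
          (if m = 1 then mp_add mp_id (mp_transpose (Gmat A r 1))
           else mp_transpose (Gmat A r m)))"

definition arrival :: "(nat \<times> nat) set \<Rightarrow> (nat \<Rightarrow> enat) \<Rightarrow> (nat \<Rightarrow> int \<Rightarrow> ereal) \<Rightarrow> nat \<Rightarrow> nat \<Rightarrow> ereal" where
  "arrival A r d i k =
     (if preds A i = {} then -\<infinity>
      else SUP j\<in>preds A i. d j (int k - int (the_enat (r i))))"

end

theory Submission
  imports Defs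
begin

(* Fix k >= 1 and put x = d(k), B = T_k G_0^T and b = (+)_{m=1..M'} T_k Y_m d(k-m),
   where Y_1 = E (+) G_1^T and Y_m = G_m^T for m >= 2.  Splitting the arrival epoch
   a_i(k) according to the buffer size m = r_i turns the recursion into the implicit
   max-plus equation  x = B x (+) b.  An entry B_ij is finite only if (j,i) is an
   arc of the graph G_0, so a finite entry of B^q yields a path with q arcs in G_0;
   as no path is longer than p, B^(p+1) = epsilon.  For such a nilpotent B, the
   implicit equation forces x = (E (+) B)^p b, which by associativity of the
   max-plus products is the asserted explicit equation. *)


lemma finite_SUP_attained:
  fixes f :: "'a \<Rightarrow> ereal"
  assumes "finite S" "S \<noteq> {}"
  obtains s where "s \<in> S" "(SUP s\<in>S. f s) = f s"
proof -
  have "Sup (f ` S) = Max (f ` S)" using assms by (simp add: cSup_eq_Max)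
  moreover have "Max (f ` S) \<in> f ` S" using assms by simp
  ultimately show ?thesis using that by auto
qed

(* Adding a constant distributes over a finite supremum; the constant may be
   -\<infinity>, only +\<infinity> must be excluded for the empty supremum. *)
lemma finite_SUP_add_left:
  fixes f :: "'a \<Rightarrow> ereal"
  assumes "finite S" "c \<noteq> \<infinity> \<or> S \<noteq> {}"
  shows "c + (SUP s\<in>S. f s) = (SUP s\<in>S. c + f s)"
proof (cases "S = {}")
  case True then show ?thesis using assms by (cases c) (auto simp: bot_ereal_def)
next
  case False
  then obtain s0 where s0: "s0 \<in> S" "(SUP s\<in>S. f s) = f s0"
    using finite_SUP_attained[OF assms(1)] by blast
  show ?thesis
  proof (rule antisym)
    show "c + (SUP s\<in>S. f s) \<le> (SUP s\<in>S. c + f s)" using s0 by (auto intro: SUP_upper)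
    show "(SUP s\<in>S. c + f s) \<le> c + (SUP s\<in>S. f s)"
      by (rule SUP_least) (simp add: SUP_upper add_left_mono)
  qed
qed

lemma finite_SUP_add_right:
  fixes f :: "'a \<Rightarrow> ereal"
  assumes "finite S" "c \<noteq> \<infinity> \<or> S \<noteq> {}"
  shows "(SUP s\<in>S. f s) + c = (SUP s\<in>S. f s + c)"
  using finite_SUP_add_left[OF assms, of f] by (simp add: add.commute)

lemma finite_SUP_ne_PInf:
  fixes f :: "'a \<Rightarrow> ereal"
  assumes "finite S" "\<forall>s\<in>S. f s \<noteq> \<infinity>"
  shows "(SUP s\<in>S. f s) \<noteq> \<infinity>"
proof (cases "S = {}")
  case True then show ?thesis by (simp add: bot_ereal_def)
next
  case False then show ?thesis using finite_SUP_attained[OF assms(1) False, of f] assms by metis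
qed

lemma SUP_ne_MInf_witness:
  fixes f :: "'a \<Rightarrow> ereal"
  assumes "(SUP s\<in>S. f s) \<noteq> -\<infinity>"
  obtains s where "s \<in> S" "f s \<noteq> -\<infinity>"
proof -
  have "\<exists>s\<in>S. f s \<noteq> -\<infinity>"
  proof (rule ccontr)
    assume "\<not> ?thesis"
    then have "(SUP s\<in>S. f s) \<le> -\<infinity>" by (intro SUP_least) auto
    with assms show False by simp
  qed
  with that show ?thesis by blast
qed

lemma SUP_if_MInf:
  fixes f :: "'a \<Rightarrow> ereal"
  shows "(SUP s\<in>S. if P s then f s else -\<infinity>) = (SUP s\<in>{s\<in>S. P s}. f s)"
proof (rule antisym)
  show "(SUP s\<in>S. if P s then f s else -\<infinity>) \<le> (SUP s\<in>{s\<in>S. P s}. f s)"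
    by (rule SUP_least) (auto intro: SUP_upper)
  show "(SUP s\<in>{s\<in>S. P s}. f s) \<le> (SUP s\<in>S. if P s then f s else -\<infinity>)"
    by (rule SUP_least) (use SUP_upper[of _ S "\<lambda>s. if P s then f s else -\<infinity>"] in force)
qed

lemma SUP_max_distrib:
  "(SUP x\<in>A. max (f x) (g x)) = max (SUP x\<in>A. f x) (SUP x\<in>A. (g x::ereal))"
  unfolding sup_max[symmetric] by (rule Complete_Lattices.SUP_sup_distrib[symmetric])

lemma ereal_add_ne_PInf: "(a::ereal) \<noteq> \<infinity> \<Longrightarrow> b \<noteq> \<infinity> \<Longrightarrow> a + b \<noteq> \<infinity>"
  by (cases a; cases b) auto

lemma ereal_max_add: "max (a::ereal) b + c = max (a + c) (b + c)"
  by (cases "a \<le> b") (auto simp: max_def add_right_mono antisym)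

lemma ereal_add_max: "c + max (a::ereal) b = max (c + a) (c + b)"
  using ereal_max_add[of a b c] by (simp add: add.commute)

lemma ereal_MInf_add: "x \<noteq> \<infinity> \<Longrightarrow> -\<infinity> + (x::ereal) = -\<infinity>"
  by (cases x) auto


(* Max-plus matrix calculus.  Products range over {1..n}; in ereal the sum
   -\<infinity> + \<infinity> is \<infinity>, so the usual laws need that no entry is +\<infinity>. *)

definition mp_finite_mat :: "nat \<Rightarrow> mpmat \<Rightarrow> bool" where
  "mp_finite_mat n X \<longleftrightarrow> (\<forall>i\<in>{1..n}. \<forall>j\<in>{1..n}. X i j \<noteq> \<infinity>)"

definition mp_finite_vec :: "nat \<Rightarrow> mpvec \<Rightarrow> bool" where
  "mp_finite_vec n v \<longleftrightarrow> (\<forall>j\<in>{1..n}. v j \<noteq> \<infinity>)"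

lemma mp_mult_finite:
  assumes "mp_finite_mat n X" "mp_finite_mat n Y"
  shows "mp_finite_mat n (mp_mult n X Y)"
  using assms unfolding mp_finite_mat_def mp_mult_def
  by (intro ballI finite_SUP_ne_PInf) (auto intro!: ereal_add_ne_PInf)

lemma mp_add_finite: "mp_finite_mat n X \<Longrightarrow> mp_finite_mat n Y \<Longrightarrow> mp_finite_mat n (mp_add X Y)"
  unfolding mp_finite_mat_def mp_add_def by (auto simp: max_def)

lemma mp_id_finite: "mp_finite_mat n mp_id"
  unfolding mp_finite_mat_def mp_id_def by auto

lemma mp_pow_finite: "mp_finite_mat n X \<Longrightarrow> mp_finite_mat n (mp_pow n X q)"
  by (induction q) (auto simp: mp_id_finite mp_mult_finite)

lemma mp_transpose_finite: "mp_finite_mat n X \<Longrightarrow> mp_finite_mat n (mp_transpose X)"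
  unfolding mp_finite_mat_def mp_transpose_def by auto

lemma Tdiag_finite: "mp_finite_mat n (Tdiag \<tau> k)"
  unfolding mp_finite_mat_def Tdiag_def by auto

lemma Gmat_finite: "mp_finite_mat n (Gmat A r m)"
  unfolding mp_finite_mat_def Gmat_def by auto

lemma mp_mult_vec_finite:
  assumes "mp_finite_mat n X" "mp_finite_vec n v"
  shows "mp_finite_vec n (mp_mult_vec n X v)"
  using assms unfolding mp_finite_vec_def mp_finite_mat_def mp_mult_vec_def
  by (intro ballI finite_SUP_ne_PInf) (auto intro!: ereal_add_ne_PInf)

lemma mp_mult_vec_cong:
  "(\<And>j. j \<in> {1..n} \<Longrightarrow> v j = w j) \<Longrightarrow> mp_mult_vec n X v i = mp_mult_vec n X w i"
  unfolding mp_mult_vec_def by (rule SUP_cong) auto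

lemma mp_mult_vec_assoc:
  assumes "mp_finite_mat n X" "mp_finite_vec n v" "i \<in> {1..n}"
  shows "mp_mult_vec n (mp_mult n X Y) v i = mp_mult_vec n X (mp_mult_vec n Y v) i"
proof -
  have "mp_mult_vec n (mp_mult n X Y) v i = (SUP j\<in>{1..n}. SUP k\<in>{1..n}. X i k + Y k j + v j)"
    unfolding mp_mult_vec_def mp_mult_def
    by (rule SUP_cong[OF refl], rule finite_SUP_add_right) (use assms(2) in \<open>auto simp: mp_finite_vec_def\<close>)
  also have "\<dots> = (SUP k\<in>{1..n}. SUP j\<in>{1..n}. X i k + (Y k j + v j))"
    by (subst SUP_commute) (simp add: add.assoc)
  also have "\<dots> = mp_mult_vec n X (mp_mult_vec n Y v) i"
    unfolding mp_mult_vec_def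
    by (rule SUP_cong[OF refl], rule finite_SUP_add_left[symmetric])
      (use assms(1,3) in \<open>auto simp: mp_finite_mat_def\<close>)
  finally show ?thesis .
qed

lemma mp_mult_vec_add:
  "mp_mult_vec n (mp_add X Y) v i = max (mp_mult_vec n X v i) (mp_mult_vec n Y v i)"
  unfolding mp_mult_vec_def mp_add_def ereal_max_add by (rule SUP_max_distrib)

lemma mp_mult_vec_max:
  "mp_mult_vec n X (\<lambda>j. max (v j) (w j)) i = max (mp_mult_vec n X v i) (mp_mult_vec n X w i)"
  unfolding mp_mult_vec_def ereal_add_max by (rule SUP_max_distrib)

lemma mp_mult_vec_mono:
  "(\<And>j. j \<in> {1..n} \<Longrightarrow> v j \<le> w j) \<Longrightarrow> mp_mult_vec n X v i \<le> mp_mult_vec n X w i"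
  unfolding mp_mult_vec_def by (intro SUP_subset_mono) (auto intro: add_left_mono)

lemma mp_mult_vec_single_entry:
  assumes "mp_finite_vec n v" "i \<in> {1..n}"
    and "\<And>j. j \<in> {1..n} \<Longrightarrow> j \<noteq> i \<Longrightarrow> X i j = -\<infinity>"
  shows "mp_mult_vec n X v i = X i i + v i"
proof -
  have "mp_mult_vec n X v i = (SUP j\<in>{1..n}. if j = i then X i j + v j else -\<infinity>)"
    unfolding mp_mult_vec_def
    by (rule SUP_cong[OF refl]) (use assms in \<open>auto simp: mp_finite_vec_def ereal_MInf_add\<close>)
  also have "\<dots> = (SUP j\<in>{j\<in>{1..n}. j = i}. X i j + v j)" by (rule SUP_if_MInf)
  also have "{j\<in>{1..n}. j = i} = {i}" using assms(2) by auto
  finally show ?thesis by simp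
qed

lemma mp_mult_vec_id:
  "mp_finite_vec n v \<Longrightarrow> i \<in> {1..n} \<Longrightarrow> mp_mult_vec n mp_id v i = v i"
  by (subst mp_mult_vec_single_entry) (auto simp: mp_id_def)

lemma mp_mult_vec_Tdiag:
  "mp_finite_vec n v \<Longrightarrow> i \<in> {1..n} \<Longrightarrow> mp_mult_vec n (Tdiag \<tau> k) v i = ereal (\<tau> i k) + v i"
  by (subst mp_mult_vec_single_entry) (auto simp: Tdiag_def)

lemma mp_mult_Tdiag:
  assumes "mp_finite_mat n Z" "i \<in> {1..n}" "j \<in> {1..n}"
  shows "mp_mult n (Tdiag \<tau> k) Z i j = ereal (\<tau> i k) + Z i j"
  using mp_mult_vec_single_entry[of n "\<lambda>l. Z l j" i "Tdiag \<tau> k"] assms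
  by (auto simp: mp_mult_def mp_mult_vec_def mp_finite_vec_def mp_finite_mat_def Tdiag_def)

lemma mp_mult_vec_Tdiag_mult:
  assumes "mp_finite_mat n Z" "mp_finite_vec n w" "i \<in> {1..n}"
  shows "mp_mult_vec n (mp_mult n (Tdiag \<tau> k) Z) w i = ereal (\<tau> i k) + mp_mult_vec n Z w i"
  using assms by (simp add: mp_mult_vec_assoc Tdiag_finite mp_mult_vec_Tdiag mp_mult_vec_finite)

lemma mp_mult_vec_MInf_row:
  assumes "mp_finite_vec n v" "\<And>j. j \<in> {1..n} \<Longrightarrow> X i j = -\<infinity>"
  shows "mp_mult_vec n X v i = -\<infinity>"
proof -
  have "mp_mult_vec n X v i = (SUP j\<in>{1..n}. -\<infinity>)"
    unfolding mp_mult_vec_def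
    by (rule SUP_cong[OF refl]) (use assms in \<open>auto simp: mp_finite_vec_def ereal_MInf_add\<close>)
  then show ?thesis by (cases "{1..n} = ({}::nat set)") (auto simp: bot_ereal_def)
qed

lemma mp_mult_vec_SUP:
  assumes "finite S" "mp_finite_mat n X" "i \<in> {1..n}"
  shows "(SUP m\<in>S. mp_mult_vec n X (w m) i) = mp_mult_vec n X (\<lambda>j. SUP m\<in>S. w m j) i"
proof -
  have "mp_mult_vec n X (\<lambda>j. SUP m\<in>S. w m j) i = (SUP j\<in>{1..n}. SUP m\<in>S. X i j + w m j)"
    unfolding mp_mult_vec_def
    by (rule SUP_cong[OF refl], rule finite_SUP_add_left) (use assms in \<open>auto simp: mp_finite_mat_def\<close>)
  also have "\<dots> = (SUP m\<in>S. mp_mult_vec n X (w m) i)"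
    unfolding mp_mult_vec_def by (rule SUP_commute)
  finally show ?thesis by simp
qed


lemma mp_path_snoc:
  assumes "mp_path n G vs" "i \<in> {1..n}" "G (last vs) i \<noteq> -\<infinity>"
  shows "mp_path n G (vs @ [i])"
  unfolding mp_path_def
proof (intro conjI allI impI)
  show "vs @ [i] \<noteq> []" "set (vs @ [i]) \<subseteq> {1..n}" using assms by (auto simp: mp_path_def)
  fix l assume l: "Suc l < length (vs @ [i])"
  show "G ((vs @ [i]) ! l) ((vs @ [i]) ! Suc l) \<noteq> -\<infinity>"
  proof (cases "Suc l < length vs")
    case True
    then show ?thesis using assms(1) by (auto simp: mp_path_def nth_append)
  next
    case False
    then have "Suc l = length vs" "l = length vs - 1" using l by simp_all
    then show ?thesis using assms(1,3) by (auto simp: mp_path_def nth_append last_conv_nth)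
  qed
qed

lemma mp_pow_finite_entry_path:
  assumes X: "mp_finite_mat n X"
    and XG: "\<And>i j. i \<in> {1..n} \<Longrightarrow> j \<in> {1..n} \<Longrightarrow> X i j \<noteq> -\<infinity> \<Longrightarrow> G j i \<noteq> -\<infinity>"
  shows "i \<in> {1..n} \<Longrightarrow> j \<in> {1..n} \<Longrightarrow> mp_pow n X q i j \<noteq> -\<infinity> \<Longrightarrow>
     \<exists>vs. mp_path n G vs \<and> length vs = Suc q \<and> last vs = i"
proof (induction q arbitrary: i)
  case 0
  then have "i = j" by (auto simp: mp_id_def split: if_splits)
  then show ?case using 0 by (intro exI[of _ "[i]"]) (auto simp: mp_path_def)
next
  case (Suc q)
  have "(SUP l\<in>{1..n}. X i l + mp_pow n X q l j) \<noteq> -\<infinity>"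
    using Suc.prems by (simp add: mp_mult_def)
  then obtain l where l: "l \<in> {1..n}" "X i l + mp_pow n X q l j \<noteq> -\<infinity>"
    by (rule SUP_ne_MInf_witness)
  have "mp_pow n X q l j \<noteq> \<infinity>" "X i l \<noteq> \<infinity>"
    using mp_pow_finite[OF X] X l Suc.prems by (auto simp: mp_finite_mat_def)
  then have "X i l \<noteq> -\<infinity>" "mp_pow n X q l j \<noteq> -\<infinity>"
    using l(2) by (auto simp: ereal_MInf_add)
  moreover obtain vs where "mp_path n G vs" "length vs = Suc q" "last vs = l"
    using Suc.IH[OF l(1) Suc.prems(2)] calculation(2) by blast
  ultimately show ?case
    using XG[OF Suc.prems(1) l(1)] Suc.prems(1) mp_path_snoc
    by (intro exI[of _ "vs @ [i]"]) auto
qed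

lemma mp_pow_nilpotent:
  assumes "mp_finite_mat n X"
    and "\<And>i j. i \<in> {1..n} \<Longrightarrow> j \<in> {1..n} \<Longrightarrow> X i j \<noteq> -\<infinity> \<Longrightarrow> G j i \<noteq> -\<infinity>"
    and "longest_path_length n G p" "i \<in> {1..n}" "j \<in> {1..n}"
  shows "mp_pow n X (Suc p) i j = -\<infinity>"
  using mp_pow_finite_entry_path[OF assms(1,2,4,5), where q="Suc p"] assms(3)
  by (force simp: longest_path_length_def)


lemma mp_star_iterate_Suc:
  assumes "mp_finite_mat n B" "mp_finite_vec n b" "i \<in> {1..n}"
  defines "c q \<equiv> mp_mult_vec n (mp_pow n (mp_add mp_id B) q) b"
  shows "c (Suc q) i = max (c q i) (mp_mult_vec n B (c q) i)"
proof -
  have C: "mp_finite_mat n (mp_add mp_id B)" using assms(1) by (simp add: mp_add_finite mp_id_finite)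
  then have "c (Suc q) i = mp_mult_vec n (mp_add mp_id B) (c q) i"
    unfolding c_def using assms(2,3) by (simp add: mp_mult_vec_assoc mp_pow_finite)
  also have "\<dots> = max (c q i) (mp_mult_vec n B (c q) i)"
    unfolding c_def using C assms(2,3)
    by (simp add: mp_mult_vec_add mp_mult_vec_id mp_pow_finite mp_mult_vec_finite)
  finally show ?thesis .
qed

lemma mp_star_iterate_ge:
  assumes "mp_finite_mat n B" "mp_finite_vec n b" "i \<in> {1..n}"
  shows "b i \<le> mp_mult_vec n (mp_pow n (mp_add mp_id B) q) b i"
proof (induction q)
  case 0 then show ?case using assms by (simp add: mp_mult_vec_id)
next
  case (Suc q) then show ?case
    using mp_star_iterate_Suc[OF assms] by (simp add: le_max_iff_disj)
qed

(* Substituting the equation q+1 times into itself:  x <= B^(q+1) x (+) c_q. *)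
lemma mp_implicit_unroll:
  assumes B: "mp_finite_mat n B" and x: "mp_finite_vec n x" and b: "mp_finite_vec n b"
    and eq: "\<And>i. i \<in> {1..n} \<Longrightarrow> x i = max (mp_mult_vec n B x i) (b i)"
  defines "c q \<equiv> mp_mult_vec n (mp_pow n (mp_add mp_id B) q) b"
  shows "i \<in> {1..n} \<Longrightarrow> x i \<le> max (mp_mult_vec n (mp_pow n B (Suc q)) x i) (c q i)"
proof (induction q arbitrary: i)
  case 0
  have "mp_mult_vec n (mp_pow n B (Suc 0)) x i = mp_mult_vec n B (mp_mult_vec n mp_id x) i"
    using 0 B x by (simp add: mp_mult_vec_assoc mp_id_finite)
  also have "\<dots> = mp_mult_vec n B x i"
    by (rule mp_mult_vec_cong) (use x in \<open>simp add: mp_mult_vec_id\<close>)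
  finally show ?case using eq[OF 0] by (simp add: c_def mp_mult_vec_id[OF b 0])
next
  case (Suc q)
  let ?Bx = "\<lambda>q. mp_mult_vec n (mp_pow n B q) x"
  have "x i = max (mp_mult_vec n B x i) (b i)" by (rule eq[OF Suc.prems])
  also have "\<dots> \<le> max (mp_mult_vec n B (\<lambda>j. max (?Bx (Suc q) j) (c q j)) i) (b i)"
    by (intro max.mono mp_mult_vec_mono Suc.IH order_refl)
  also have "\<dots> = max (max (?Bx (Suc (Suc q)) i) (mp_mult_vec n B (c q) i)) (b i)"
    by (simp add: mp_mult_vec_max mp_mult_vec_assoc[OF B x Suc.prems])
  also have "\<dots> \<le> max (?Bx (Suc (Suc q)) i) (c (Suc q) i)"
  proof -
    have "mp_mult_vec n B (c q) i \<le> c (Suc q) i" "b i \<le> c (Suc q) i"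
      using mp_star_iterate_Suc[OF B b Suc.prems, of q] mp_star_iterate_ge[OF B b Suc.prems, of "Suc q"]
      unfolding c_def by simp_all
    then show ?thesis by (intro max.boundedI max.cobounded1 max.coboundedI2)
  qed
  finally show ?case .
qed

lemma mp_implicit_equation_solution:
  assumes B: "mp_finite_mat n B" and x: "mp_finite_vec n x" and b: "mp_finite_vec n b"
    and eq: "\<And>i. i \<in> {1..n} \<Longrightarrow> x i = max (mp_mult_vec n B x i) (b i)"
    and nil: "\<And>i j. i \<in> {1..n} \<Longrightarrow> j \<in> {1..n} \<Longrightarrow> mp_pow n B (Suc p) i j = -\<infinity>"
    and i: "i \<in> {1..n}"
  shows "x i = mp_mult_vec n (mp_pow n (mp_add mp_id B) p) b i"
proof (rule antisym)
  have "mp_mult_vec n (mp_pow n B (Suc p)) x i = -\<infinity>"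
    using x nil[OF i] by (rule mp_mult_vec_MInf_row)
  then show "x i \<le> mp_mult_vec n (mp_pow n (mp_add mp_id B) p) b i"
    using mp_implicit_unroll[OF B x b eq i, of p] by simp
  have "\<forall>i\<in>{1..n}. mp_mult_vec n (mp_pow n (mp_add mp_id B) q) b i \<le> x i" for q
  proof (induction q)
    case 0 then show ?case using eq b by (simp add: mp_mult_vec_id)
  next
    case (Suc q)
    show ?case
    proof
      fix i assume i: "i \<in> {1..n}"
      have "mp_mult_vec n B (mp_mult_vec n (mp_pow n (mp_add mp_id B) q) b) i \<le> mp_mult_vec n B x i"
        by (rule mp_mult_vec_mono) (use Suc.IH in blast)
      also have "\<dots> \<le> x i" using eq[OF i] by simp
      finally show "mp_mult_vec n (mp_pow n (mp_add mp_id B) (Suc q)) b i \<le> x i"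
        unfolding mp_star_iterate_Suc[OF B b i] using Suc.IH i by simp
    qed
  qed
  then show "mp_mult_vec n (mp_pow n (mp_add mp_id B) p) b i \<le> x i" using i by blast
qed


definition Bmat :: "nat \<Rightarrow> (nat \<times> nat) set \<Rightarrow> (nat \<Rightarrow> enat) \<Rightarrow> (nat \<Rightarrow> nat \<Rightarrow> real) \<Rightarrow> nat \<Rightarrow> mpmat"
  where "Bmat n A r \<tau> k = mp_mult n (Tdiag \<tau> k) (mp_transpose (Gmat A r 0))"

definition Ymat :: "(nat \<times> nat) set \<Rightarrow> (nat \<Rightarrow> enat) \<Rightarrow> nat \<Rightarrow> mpmat" where
  "Ymat A r m = (if m = 1 then mp_add mp_id (mp_transpose (Gmat A r 1)) else mp_transpose (Gmat A r m))"

lemma Tm_eq: "Tm n A r \<tau> p m k =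
    mp_mult n (mp_pow n (mp_add mp_id (Bmat n A r \<tau> k)) p) (mp_mult n (Tdiag \<tau> k) (Ymat A r m))"
  by (simp add: Tm_def Bmat_def Ymat_def)

lemma Bmat_finite: "mp_finite_mat n (Bmat n A r \<tau> k)"
  by (simp add: Bmat_def mp_mult_finite Tdiag_finite mp_transpose_finite Gmat_finite)

lemma Ymat_finite: "mp_finite_mat n (Ymat A r m)"
  by (simp add: Ymat_def mp_add_finite mp_id_finite mp_transpose_finite Gmat_finite)

(* A finite entry of B_k is a reversed arc of G_0, so B_k^(p+1) vanishes. *)
lemma Bmat_nilpotent:
  assumes "longest_path_length n (Gmat A r 0) p" "i \<in> {1..n}" "j \<in> {1..n}"
  shows "mp_pow n (Bmat n A r \<tau> k) (Suc p) i j = -\<infinity>"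
proof (rule mp_pow_nilpotent[OF Bmat_finite _ assms])
  fix i j assume "i \<in> {1..n}" "j \<in> {1..n}" "Bmat n A r \<tau> k i j \<noteq> -\<infinity>"
  then have "ereal (\<tau> i k) + mp_transpose (Gmat A r 0) i j \<noteq> -\<infinity>"
    by (simp add: Bmat_def mp_mult_Tdiag mp_transpose_finite Gmat_finite)
  then show "Gmat A r 0 j i \<noteq> -\<infinity>" by (simp add: mp_transpose_def)
qed

lemma Gmat_transpose_mult_vec:
  assumes arcs: "A \<subseteq> {1..n} \<times> {1..n}" and v: "mp_finite_vec n v"
  shows "mp_mult_vec n (mp_transpose (Gmat A r m)) v i =
           (if r i = enat m then (SUP j\<in>preds A i. v j) else -\<infinity>)"
proof -
  have "mp_mult_vec n (mp_transpose (Gmat A r m)) v i =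
          (SUP j\<in>{1..n}. if j \<in> preds A i \<and> r i = enat m then v j else -\<infinity>)"
    unfolding mp_mult_vec_def mp_transpose_def Gmat_def
    by (rule SUP_cong[OF refl]) (use v in \<open>auto simp: mp_finite_vec_def ereal_MInf_add\<close>)
  also have "\<dots> = (SUP j\<in>{j\<in>{1..n}. j \<in> preds A i \<and> r i = enat m}. v j)" by (rule SUP_if_MInf)
  also have "{j\<in>{1..n}. j \<in> preds A i \<and> r i = enat m} = (if r i = enat m then preds A i else {})"
    using arcs by (auto simp: preds_def)
  finally show ?thesis by (simp add: bot_ereal_def)
qed

lemma Mfin_ge:
  assumes "i \<in> {1..n}" "r i = enat m"
  shows "m \<le> Mfin n r"
proof -
  have "{the_enat (r i) | i. i \<in> {1..n} \<and> r i \<noteq> \<infinity>} = (\<lambda>i. the_enat (r i)) ` {i\<in>{1..n}. r i \<noteq> \<infinity>}"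
    by auto
  then have "finite ({0} \<union> {the_enat (r i) | i. i \<in> {1..n} \<and> r i \<noteq> \<infinity>})" by simp
  moreover have "m \<in> {0} \<union> {the_enat (r i) | i. i \<in> {1..n} \<and> r i \<noteq> \<infinity>}"
    using assms by force
  ultimately show ?thesis unfolding Mfin_def by (rule Max_ge)
qed

(* The arrival epoch, split according to the buffer size: only the term m = r_i
   survives, and nodes without predecessors (r_i = \<infinity>) contribute nothing. *)
lemma arrival_split:
  assumes arcs: "A \<subseteq> {1..n} \<times> {1..n}"
    and r_inf: "\<forall>i\<in>{1..n}. r i = \<infinity> \<longleftrightarrow> preds A i = {}"
    and d_fin: "\<And>j z. j \<in> {1..n} \<Longrightarrow> d j z \<noteq> \<infinity>"
    and M: "Mfin n r \<le> M" and i: "i \<in> {1..n}"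
  shows "arrival A r d i k =
           (SUP m\<in>{0..M}. mp_mult_vec n (mp_transpose (Gmat A r m)) (\<lambda>j. d j (int k - int m)) i)"
proof -
  have v: "mp_finite_vec n (\<lambda>j. d j (int k - int m))" for m using d_fin by (simp add: mp_finite_vec_def)
  have "(SUP m\<in>{0..M}. mp_mult_vec n (mp_transpose (Gmat A r m)) (\<lambda>j. d j (int k - int m)) i) =
          (SUP m\<in>{0..M}. if r i = enat m then (SUP j\<in>preds A i. d j (int k - int m)) else -\<infinity>)"
    by (simp add: Gmat_transpose_mult_vec[OF arcs v])
  also have "\<dots> = (SUP m\<in>{m\<in>{0..M}. r i = enat m}. SUP j\<in>preds A i. d j (int k - int m))"
    by (rule SUP_if_MInf)
  also have "\<dots> = arrival A r d i k"
  proof (cases "r i")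
    case (enat m0)
    then have "{m\<in>{0..M}. r i = enat m} = {m0}" using Mfin_ge[of i n r m0, OF i enat] M by auto
    moreover have "preds A i \<noteq> {}" using bspec[OF r_inf i] enat by simp
    ultimately show ?thesis by (simp add: arrival_def enat)
  next
    case infinity
    moreover have "preds A i = {}" using bspec[OF r_inf i] infinity by simp
    moreover have "{m\<in>{0..M}. r i = enat m} = {}" using infinity by simp
    ultimately show ?thesis by (simp add: arrival_def bot_ereal_def)
  qed
  finally show ?thesis by simp
qed

(* The identity in Y_1 = E (+) G_1^T contributes the term d(k-1) of the recursion. *)
lemma Ymat_sum_mult_vec:
  assumes v: "\<And>m. mp_finite_vec n (v m)" and M: "1 \<le> M" and i: "i \<in> {1..n}"
  shows "(SUP m\<in>{1..M}. mp_mult_vec n (Ymat A r m) (v m) i) =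
           max (v 1 i) (SUP m\<in>{1..M}. mp_mult_vec n (mp_transpose (Gmat A r m)) (v m) i)"
proof -
  let ?g = "\<lambda>m. mp_mult_vec n (mp_transpose (Gmat A r m)) (v m) i"
  have "(SUP m\<in>{1..M}. mp_mult_vec n (Ymat A r m) (v m) i)
        = (SUP m\<in>{1..M}. max (if m = 1 then v 1 i else -\<infinity>) (?g m))"
    using i v by (intro SUP_cong) (auto simp: Ymat_def mp_mult_vec_add mp_mult_vec_id)
  also have "\<dots> = max (SUP m\<in>{m\<in>{1..M}. m = 1}. v 1 i) (SUP m\<in>{1..M}. ?g m)"
    by (simp only: SUP_max_distrib SUP_if_MInf)
  also have "{m\<in>{1..M}. m = 1} = {1}" using M by auto
  finally show ?thesis by simp
qed

lemma departure_implicit_equation: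
  assumes arcs: "A \<subseteq> {1..n} \<times> {1..n}"
    and r_inf: "\<forall>i\<in>{1..n}. r i = \<infinity> \<longleftrightarrow> preds A i = {}"
    and d_fin: "\<And>j z. j \<in> {1..n} \<Longrightarrow> d j z \<noteq> \<infinity>"
    and d_rec: "\<forall>i\<in>{1..n}. \<forall>k\<ge>1.
        d i (int k) = max (ereal (\<tau> i k) + arrival A r d i k) (ereal (\<tau> i k) + d i (int k - 1))"
    and k: "k \<ge> 1" and i: "i \<in> {1..n}"
  shows "d i (int k) = max (mp_mult_vec n (Bmat n A r \<tau> k) (\<lambda>j. d j (int k)) i)
           (SUP m\<in>{1..max (Mfin n r) 1}. mp_mult_vec n (mp_mult n (Tdiag \<tau> k) (Ymat A r m)) (\<lambda>j. d j (int k - int m)) i)"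
proof -
  define M' where "M' = max (Mfin n r) 1"
  define v where "v m = (\<lambda>j. d j (int k - int m))" for m :: nat
  define g where "g m = mp_mult_vec n (mp_transpose (Gmat A r m)) (v m) i" for m
  have v: "mp_finite_vec n (v m)" for m using d_fin by (simp add: mp_finite_vec_def v_def)
  have Gt: "mp_finite_mat n (mp_transpose (Gmat A r m))" for m
    by (simp add: Gmat_finite mp_transpose_finite)
  have "{0..M'} = insert 0 {1..M'}" "Mfin n r \<le> M'" by (auto simp: M'_def)
  then have arr: "arrival A r d i k = max (g 0) (SUP m\<in>{1..M'}. g m)"
    using arrival_split[OF arcs r_inf d_fin _ i] by (simp add: g_def v_def sup_max)
  have Bx: "mp_mult_vec n (Bmat n A r \<tau> k) (v 0) i = ereal (\<tau> i k) + g 0"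
    unfolding Bmat_def g_def using Gt v i by (rule mp_mult_vec_Tdiag_mult)
  have Y: "(SUP m\<in>{1..M'}. mp_mult_vec n (Ymat A r m) (v m) i) = max (v 1 i) (SUP m\<in>{1..M'}. g m)"
    unfolding g_def by (rule Ymat_sum_mult_vec[OF v _ i]) (simp add: M'_def)
  have "(SUP m\<in>{1..M'}. mp_mult_vec n (mp_mult n (Tdiag \<tau> k) (Ymat A r m)) (v m) i)
        = (SUP m\<in>{1..M'}. ereal (\<tau> i k) + mp_mult_vec n (Ymat A r m) (v m) i)"
    using Ymat_finite v i by (simp add: mp_mult_vec_Tdiag_mult)
  also have "\<dots> = ereal (\<tau> i k) + max (v 1 i) (SUP m\<in>{1..M'}. g m)"
    using finite_SUP_add_left[of "{1..M'}" "ereal (\<tau> i k)" "\<lambda>m. mp_mult_vec n (Ymat A r m) (v m) i"] Y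
    by simp
  finally have b: "(SUP m\<in>{1..M'}. mp_mult_vec n (mp_mult n (Tdiag \<tau> k) (Ymat A r m)) (v m) i)
        = ereal (\<tau> i k) + max (v 1 i) (SUP m\<in>{1..M'}. g m)" .
  have "d i (int k) = max (ereal (\<tau> i k) + arrival A r d i k) (ereal (\<tau> i k) + v 1 i)"
    using d_rec i k by (simp add: v_def)
  also have "\<dots> = max (ereal (\<tau> i k) + g 0) (ereal (\<tau> i k) + max (v 1 i) (SUP m\<in>{1..M'}. g m))"
    by (simp add: arr ereal_add_max max.commute max.left_commute)
  also have "\<dots> = max (mp_mult_vec n (Bmat n A r \<tau> k) (v 0) i)
      (SUP m\<in>{1..M'}. mp_mult_vec n (mp_mult n (Tdiag \<tau> k) (Ymat A r m)) (v m) i)"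
    by (simp only: Bx b)
  finally show ?thesis by (simp add: v_def M'_def)
qed

lemma Tm_sum_mult_vec:
  assumes v: "\<And>m. mp_finite_vec n (w m)" and S: "finite S" and i: "i \<in> {1..n}"
  shows "(SUP m\<in>S. mp_mult_vec n (Tm n A r \<tau> p m k) (w m) i) =
    mp_mult_vec n (mp_pow n (mp_add mp_id (Bmat n A r \<tau> k)) p)
      (\<lambda>j. SUP m\<in>S. mp_mult_vec n (mp_mult n (Tdiag \<tau> k) (Ymat A r m)) (w m) j) i"
proof -
  have C: "mp_finite_mat n (mp_pow n (mp_add mp_id (Bmat n A r \<tau> k)) p)"
    by (simp add: mp_pow_finite mp_add_finite mp_id_finite Bmat_finite)
  show ?thesis
    unfolding Tm_eq mp_mult_vec_assoc[OF C v i]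
    by (rule mp_mult_vec_SUP[OF S C i])
qed

theorem theorem2:
  fixes n :: nat and A :: "(nat \<times> nat) set" and r :: "nat \<Rightarrow> enat"
    and \<tau> :: "nat \<Rightarrow> nat \<Rightarrow> real" and d :: "nat \<Rightarrow> int \<Rightarrow> ereal" and p :: nat
  assumes arcs: "A \<subseteq> {1..n} \<times> {1..n}"
    and r_inf: "\<forall>i\<in>{1..n}. r i = \<infinity> \<longleftrightarrow> preds A i = {}"
    and tau_pos: "\<forall>i\<in>{1..n}. \<forall>k\<ge>1. \<tau> i k > 0"
    and d_zero: "\<forall>i\<in>{1..n}. d i 0 = 0"
    and d_neg: "\<forall>i\<in>{1..n}. \<forall>k<0. d i k = -\<infinity>"
    and d_range: "\<forall>i\<in>{1..n}. \<forall>k\<ge>1. d i k \<noteq> \<infinity>"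
    and d_rec: "\<forall>i\<in>{1..n}. \<forall>k\<ge>1.
        d i (int k) = max (ereal (\<tau> i k) + arrival A r d i k) (ereal (\<tau> i k) + d i (int k - 1))"
    and acyc: "mp_acyclic n (Gmat A r 0)"
    and longest: "longest_path_length n (Gmat A r 0) p"
  shows "\<forall>k\<ge>1. \<forall>i\<in>{1..n}.
     d i (int k) = (SUP m\<in>{1..max (Mfin n r) 1}.
                      mp_mult_vec n (Tm n A r \<tau> p m k) (\<lambda>j. d j (int k - int m)) i)"
proof (intro allI impI ballI)
  fix k i :: nat assume k: "k \<ge> 1" and i: "i \<in> {1..n}"
  define M' where "M' = max (Mfin n r) 1"
  define b where "b = (\<lambda>i. SUP m\<in>{1..M'}.
                   mp_mult_vec n (mp_mult n (Tdiag \<tau> k) (Ymat A r m)) (\<lambda>j. d j (int k - int m)) i)"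
  have d_fin: "d j z \<noteq> \<infinity>" if "j \<in> {1..n}" for j z
    using d_range d_zero d_neg that by (cases "z \<ge> 1"; cases "z = 0") auto
  then have v: "mp_finite_vec n (\<lambda>j. d j (int k - int m))" for m by (simp add: mp_finite_vec_def)
  have b: "mp_finite_vec n b"
    unfolding b_def mp_finite_vec_def
    using mp_mult_vec_finite[OF mp_mult_finite[OF Tdiag_finite Ymat_finite] v]
    by (intro ballI finite_SUP_ne_PInf) (auto simp: mp_finite_vec_def)
  have "d i (int k) = mp_mult_vec n (mp_pow n (mp_add mp_id (Bmat n A r \<tau> k)) p) b i"
    using mp_implicit_equation_solution[OF Bmat_finite v[of 0] b _ Bmat_nilpotent[OF longest] i]
      departure_implicit_equation[OF arcs r_inf d_fin d_rec k] by (simp add: b_def M'_def)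
  also have "\<dots> = (SUP m\<in>{1..M'}. mp_mult_vec n (Tm n A r \<tau> p m k) (\<lambda>j. d j (int k - int m)) i)"
    unfolding b_def by (rule Tm_sum_mult_vec[OF v _ i, symmetric]) simp
  finally show "d i (int k) = (SUP m\<in>{1..max (Mfin n r) 1}.
                      mp_mult_vec n (Tm n A r \<tau> p m k) (\<lambda>j. d j (int k - int m)) i)"
    by (simp add: M'_def)
qed

end
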